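(* Let $k\ge2$, $r\in\{k-1,k,k+1\}$ and let $K$ be a triangle or an axis-parallel rectangle. Then the sum defining $V^{r-1,k}_h(K)$ is direct, and the sequence $$0\longrightarrow\mathbb R\xrightarrow{\ \subset\ }\Sigma^r_h(K)\xrightarrow{\ \nabla\ }V^{r-1,k}_h(K)\xrightarrow{\ \nabla\times\ }W^{k-1}_h(K)\longrightarrow 0$$ is a complex and is exact.
   Context: Notation: for $\bm u=(u_1,u_2)^T$, $\nabla\times\bm u=\partial_{x_1}u_2-\partial_{x_2}u_1$; for a scalar $v$, $\bm\nabla\times v=(\partial_{x_2}v,-\partial_{x_1}v)^T$. $P_i(K)$ is the space of polynomials of total degree at most $i$ on $K$, $\bm P_i(K)=[P_i(K)]^2$, $\widetilde P_i$ the homogeneous polynomials of degree $i$, $Q_{i,j}(K)$ the polynomials of degree at most $i$ in $x_1$ and at most $j$ in $x_2$, $Q_i=Q_{i,i}$; spaces with negative index are $\{0\}$. $\bm x=(x_1,x_2)^T$, $\bm x^\perp=(-x_2,x_1)^T$. The Poincaré operator is $(\mathfrak p u)(\bm x)=\int_0^1 t\,\bm x^\perp u(t\bm x)\,dt$ (origin at $0\in\mathbb R^2$). An element $K$ is either a triangle with barycentric coordinates $\lambda_1,\lambda_2,\lambda_3$, or an axis-parallel rectangle $K=(x_l,x_r)\times(y_d,y_u)$ with $h_x=x_r-x_l$, $h_y=y_u-y_d$; $\bm\tau_e$ denotes a unit tangent to an edge $e$. Bubbles: $B_t=\lambda_1\lambda_2\lambda_3$, $B_r=h_x^{-2}h_y^{-2}(x_1-x_l)(x_1-x_r)(x_2-y_d)(x_2-y_u)$.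 Local spaces, for an integer $k\ge2$ and $r\in\{k-1,k,k+1\}$: $\Sigma^r_h(K)=P_r(K)$ (triangle) or $Q_r(K)$ (rectangle). For a triangle, $W^{k-1}_h(K)=P_{k-1}(K)$ if $k\ge4$ and $P_{k-1}(K)\oplus\mathrm{span}\{B_t\}$ if $k=2,3$; for a rectangle, $W^{k-1}_h(K)=Q_{k-1}(K)$ if $k\ge3$ and $Q_1(K)\oplus\mathrm{span}\{B_r\}$ if $k=2$. Modified Poincaré operator: $\widetilde{\mathfrak p}w=\mathfrak pw-\nabla\Phi w$, where $\Phi$ is a fixed linear map from $W^{k-1}_h(K)$ into polynomials such that for every $w$ the function $(\mathfrak p w-\nabla\Phi w)\cdot\bm\tau_e$ is constant on each edge $e$ of $K$, and such that $\Phi(W^{k-1}_h(K)\cap P_j(K))\subset P_{j+1}(K)$ for triangles, resp. $\Phi(W^{k-1}_h(K)\cap Q_j(K))\subset Q_{j+1}(K)$ for rectangles, for every $j\ge0$. Then $V^{r-1,k}_h(K)=\nabla\Sigma^r_h(K)+\mathfrak pW^{k-1}_h(K)$ when $r=k+1$, or when $r=k$ and $k\ge4$; and $V^{r-1,k}_h(K)=\nabla\Sigma^r_h(K)+\widetilde{\mathfrak p}W^{k-1}_h(K)$ when $r=k-1$, or when $r=k$ and $k\in\{2,3\}$. *)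

theory Defs
  imports "HOL-Analysis.Analysis"
begin

text \<open>Polynomial spaces are spaces of polynomial functions on the whole plane
  (a polynomial is determined by its restriction to the open element K).\<close>

type_synonym pt = "real \<times> real"
type_synonym sfield = "pt \<Rightarrow> real"
type_synonym vfield = "pt \<Rightarrow> pt"

definition Ptot :: "nat \<Rightarrow> sfield set" where
  "Ptot i = {f. \<exists>c :: nat \<Rightarrow> nat \<Rightarrow> real.
     f = (\<lambda>z. \<Sum>(a,b)\<in>{(a,b). a + b \<le> i}. c a b * fst z ^ a * snd z ^ b)}"

definition Qdeg :: "nat \<Rightarrow> nat \<Rightarrow> sfield set" where
  "Qdeg i j = {f. \<exists>c :: nat \<Rightarrow> nat \<Rightarrow> real.
     f = (\<lambda>z. \<Sum>a\<le>i. \<Sum>b\<le>j. c a b * fst z ^ a * snd z ^ b)}"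

definition Poly :: "sfield set" where
  "Poly = (\<Union>i. Ptot i)"

definition d1 :: "sfield \<Rightarrow> sfield" where
  "d1 f z = deriv (\<lambda>t. f (t, snd z)) (fst z)"
definition d2 :: "sfield \<Rightarrow> sfield" where
  "d2 f z = deriv (\<lambda>t. f (fst z, t)) (snd z)"

definition grad :: "sfield \<Rightarrow> vfield" where
  "grad f z = (d1 f z, d2 f z)"

definition curl :: "vfield \<Rightarrow> sfield" where
  "curl u z = d1 (\<lambda>y. snd (u y)) z - d2 (\<lambda>y. fst (u y)) z"

definition perp :: "pt \<Rightarrow> pt" where
  "perp x = (- snd x, fst x)"

definition poinc :: "sfield \<Rightarrow> vfield" where
  "poinc u x = integral {0..1} (\<lambda>t. t * u (t *\<^sub>R x)) *\<^sub>R perp x"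

text \<open>Elements: a triangle with vertices a1 a2 a3, or the rectangle
  (xl,xr) \<times> (yd,yu).\<close>
datatype elem = Tri pt pt pt | Rect real real real real

definition det2 :: "pt \<Rightarrow> pt \<Rightarrow> real" where
  "det2 u v = fst u * snd v - snd u * fst v"

fun valid_elem :: "elem \<Rightarrow> bool" where
  "valid_elem (Tri a1 a2 a3) = (det2 (a2 - a1) (a3 - a1) \<noteq> 0)"
| "valid_elem (Rect xl xr yd yu) = (xl < xr \<and> yd < yu)"

text \<open>Barycentric coordinates of a triangle (the affine functions with
  lambda_i(a_j) = delta_ij).\<close>
definition bary1 :: "pt \<Rightarrow> pt \<Rightarrow> pt \<Rightarrow> sfield" where
  "bary1 a1 a2 a3 x = det2 (a2 - x) (a3 - x) / det2 (a2 - a1) (a3 - a1)"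

definition bubble_tri :: "pt \<Rightarrow> pt \<Rightarrow> pt \<Rightarrow> sfield" where
  "bubble_tri a1 a2 a3 x = bary1 a1 a2 a3 x * bary1 a2 a3 a1 x * bary1 a3 a1 a2 x"

definition bubble_rect :: "real \<Rightarrow> real \<Rightarrow> real \<Rightarrow> real \<Rightarrow> sfield" where
  "bubble_rect xl xr yd yu x =
     (xr - xl) powi (-2) * (yu - yd) powi (-2) *
     (fst x - xl) * (fst x - xr) * (snd x - yd) * (snd x - yu)"

fun edges :: "elem \<Rightarrow> (pt \<times> pt) set" where
  "edges (Tri a1 a2 a3) = {(a1, a2), (a2, a3), (a3, a1)}"
| "edges (Rect xl xr yd yu) =
     {((xl, yd), (xr, yd)), ((xr, yd), (xr, yu)), ((xr, yu), (xl, yu)), ((xl, yu), (xl, yd))}"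

definition tangent :: "pt \<times> pt \<Rightarrow> pt" where
  "tangent e = (1 / norm (snd e - fst e)) *\<^sub>R (snd e - fst e)"

fun Sigma_h :: "nat \<Rightarrow> elem \<Rightarrow> sfield set" where
  "Sigma_h r (Tri a1 a2 a3) = Ptot r"
| "Sigma_h r (Rect xl xr yd yu) = Qdeg r r"

fun W_h :: "nat \<Rightarrow> elem \<Rightarrow> sfield set" where
  "W_h k (Tri a1 a2 a3) =
     (if k \<ge> 4 then Ptot (k - 1)
      else {\<lambda>x. p x + c * bubble_tri a1 a2 a3 x | p c. p \<in> Ptot (k - 1)})"
| "W_h k (Rect xl xr yd yu) =
     (if k \<ge> 3 then Qdeg (k - 1) (k - 1)
      else {\<lambda>x. p x + c * bubble_rect xl xr yd yu x | p c. p \<in> Qdeg 1 1})"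

fun Deg :: "elem \<Rightarrow> nat \<Rightarrow> sfield set" where
  "Deg (Tri a1 a2 a3) j = Ptot j"
| "Deg (Rect xl xr yd yu) j = Qdeg j j"

definition admissible_Phi :: "nat \<Rightarrow> elem \<Rightarrow> (sfield \<Rightarrow> sfield) \<Rightarrow> bool" where
  "admissible_Phi k K Phi \<longleftrightarrow>
     (\<forall>w1\<in>W_h k K. \<forall>w2\<in>W_h k K. \<forall>a b::real.
        Phi (\<lambda>x. a * w1 x + b * w2 x) = (\<lambda>x. a * Phi w1 x + b * Phi w2 x)) \<and>
     (\<forall>w\<in>W_h k K. Phi w \<in> Poly) \<and>
     (\<forall>w\<in>W_h k K. \<forall>e\<in>edges K. \<exists>c. \<forall>x\<in>closed_segment (fst e) (snd e).
        inner (poinc w x - grad (Phi w) x) (tangent e) = c) \<and>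
     (\<forall>j. \<forall>w\<in>W_h k K \<inter> Deg K j. Phi w \<in> Deg K (Suc j))"

definition poinc_mod :: "(sfield \<Rightarrow> sfield) \<Rightarrow> sfield \<Rightarrow> vfield" where
  "poinc_mod Phi w x = poinc w x - grad (Phi w) x"

definition uses_mod :: "nat \<Rightarrow> nat \<Rightarrow> bool" where
  "uses_mod k r \<longleftrightarrow> r = k - 1 \<or> (r = k \<and> k \<in> {2, 3})"

definition Psum :: "nat \<Rightarrow> nat \<Rightarrow> elem \<Rightarrow> (sfield \<Rightarrow> sfield) \<Rightarrow> vfield set" where
  "Psum r k K Phi = (if uses_mod k r then poinc_mod Phi ` W_h k K else poinc ` W_h k K)"

definition V_h :: "nat \<Rightarrow> nat \<Rightarrow> elem \<Rightarrow> (sfield \<Rightarrow> sfield) \<Rightarrow> vfield set" where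
  "V_h r k K Phi = {\<lambda>x. g x + q x | g q. g \<in> grad ` Sigma_h r K \<and> q \<in> Psum r k K Phi}"

end

theory Submission imports Defs begin

text \<open>All spaces involved consist of polynomials. On polynomials the mixed partial derivatives
  commute, so \<open>curl \<circ> grad = 0\<close>, and a polynomial with vanishing gradient is constant. The
  Poincare operator is a right inverse of \<open>curl\<close>: for a monomial \<open>w\<close> of degree \<open>n\<close> it is
  \<open>x \<mapsto> w x / (n + 2) \<cdot> x\<^sup>\<perp>\<close>, and Euler's identity for homogeneous polynomials gives
  \<open>curl (p w) = w\<close>. Subtracting a gradient does not change this, and linearity of \<open>\<Phi>\<close> makes the
  modified operator map \<open>0\<close> to \<open>0\<close>. For any right inverse \<open>Q\<close> of \<open>curl\<close> the space \<open>\<nabla>\<Sigma> + Q W\<close> is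
  exact: \<open>curl\<close> maps \<open>\<nabla>s + Q w\<close> to \<open>w\<close>, and \<open>\<nabla>s = Q w\<close> forces \<open>w = curl (Q w) = 0\<close>.\<close>

inductive_set polyfun :: "sfield set" where
  monomial: "(\<lambda>z. c * fst z ^ a * snd z ^ b) \<in> polyfun"
| add: "f \<in> polyfun \<Longrightarrow> g \<in> polyfun \<Longrightarrow> (\<lambda>z. f z + g z) \<in> polyfun"

lemma polyfun_mult_monomial:
  "f \<in> polyfun \<Longrightarrow> (\<lambda>z. c * fst z ^ a * snd z ^ b * f z) \<in> polyfun"
proof (induction rule: polyfun.induct)
  case (monomial c' a' b')
  have "(\<lambda>z. c * fst z ^ a * snd z ^ b * (c' * fst z ^ a' * snd z ^ b'))
      = (\<lambda>z. (c * c') * fst z ^ (a + a') * snd z ^ (b + b'))"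
    by (simp add: fun_eq_iff power_add)
  then show ?case
    by (metis polyfun.monomial)
next
  case (add f g)
  then show ?case
    using polyfun.add[OF add.IH] by (simp add: distrib_left)
qed

lemma polyfun_mult: "f \<in> polyfun \<Longrightarrow> g \<in> polyfun \<Longrightarrow> (\<lambda>z. f z * g z) \<in> polyfun"
proof (induction rule: polyfun.induct)
  case (monomial c a b)
  then show ?case
    using polyfun_mult_monomial by blast
next
  case (add f1 f2)
  then show ?case
    using polyfun.add[OF add.IH] by (simp add: distrib_right)
qed

lemma polyfun_const: "(\<lambda>z. c) \<in> polyfun"
  using polyfun.monomial[of c 0 0] by simp

lemma polyfun_fst: "fst \<in> polyfun"
  using polyfun.monomial[of 1 1 0] by simp

lemma polyfun_snd: "snd \<in> polyfun"
  using polyfun.monomial[of 1 0 1] by simp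

lemma polyfun_cmult: "f \<in> polyfun \<Longrightarrow> (\<lambda>z. c * f z) \<in> polyfun"
  using polyfun_mult[OF polyfun_const] by blast

lemma polyfun_uminus: "f \<in> polyfun \<Longrightarrow> (\<lambda>z. - f z) \<in> polyfun"
  using polyfun_cmult[of f "-1"] by simp

lemma polyfun_diff: "f \<in> polyfun \<Longrightarrow> g \<in> polyfun \<Longrightarrow> (\<lambda>z. f z - g z) \<in> polyfun"
  using polyfun.add[OF _ polyfun_uminus] by simp

lemma polyfun_sum:
  "finite S \<Longrightarrow> (\<And>i. i \<in> S \<Longrightarrow> f i \<in> polyfun) \<Longrightarrow> (\<lambda>z. \<Sum>i\<in>S. f i z) \<in> polyfun"
proof (induction rule: finite_induct)
  case empty
  then show ?case
    using polyfun_const[of 0] by simp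
next
  case (insert x F)
  then show ?case
    using polyfun.add[of "f x" "\<lambda>z. \<Sum>i\<in>F. f i z"] by simp
qed

lemma finite_total_degree_indices: "finite {(a, b). a + b \<le> (i::nat)}"
  by (rule finite_subset[of _ "{..i} \<times> {..i}"]) auto

lemma Ptot_subset_polyfun: "Ptot i \<subseteq> polyfun"
  unfolding Ptot_def
  by (auto intro!: polyfun_sum finite_total_degree_indices polyfun.monomial)

lemma Qdeg_subset_polyfun: "Qdeg i j \<subseteq> polyfun"
  unfolding Qdeg_def by (auto intro!: polyfun_sum polyfun.monomial)

lemma Poly_subset_polyfun: "Poly \<subseteq> polyfun"
  unfolding Poly_def using Ptot_subset_polyfun by blast

lemma bary1_polyfun: "bary1 a1 a2 a3 \<in> polyfun"
proof -
  have "bary1 a1 a2 a3 = (\<lambda>x. (1 / det2 (a2 - a1) (a3 - a1)) *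
     ((fst a2 - fst x) * (snd a3 - snd x) - (snd a2 - snd x) * (fst a3 - fst x)))"
    by (simp add: fun_eq_iff bary1_def det2_def)
  also have "\<dots> \<in> polyfun"
    by (intro polyfun_cmult polyfun_diff polyfun_mult polyfun_const polyfun_fst polyfun_snd)
  finally show ?thesis .
qed

lemma bubble_tri_polyfun: "bubble_tri a1 a2 a3 \<in> polyfun"
  unfolding bubble_tri_def[abs_def] by (intro polyfun_mult bary1_polyfun)

lemma bubble_rect_polyfun: "bubble_rect xl xr yd yu \<in> polyfun"
  unfolding bubble_rect_def[abs_def]
  by (intro polyfun_cmult polyfun_diff polyfun_mult polyfun_const polyfun_fst polyfun_snd)

lemma W_h_subset_polyfun: "W_h k K \<subseteq> polyfun"
proof (cases K)
  case (Tri a1 a2 a3)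
  then show ?thesis
    using Ptot_subset_polyfun by (auto intro!: polyfun.add polyfun_cmult bubble_tri_polyfun)
next
  case (Rect xl xr yd yu)
  then show ?thesis
    using Qdeg_subset_polyfun by (auto intro!: polyfun.add polyfun_cmult bubble_rect_polyfun)
qed

lemma Sigma_h_subset_polyfun: "Sigma_h r K \<subseteq> polyfun"
  by (cases K) (use Ptot_subset_polyfun Qdeg_subset_polyfun in auto)

lemma const_in_Ptot: "(\<lambda>z. c) \<in> Ptot i"
proof -
  let ?c = "\<lambda>a b. if a = 0 \<and> b = 0 then c else 0"
  have "(\<Sum>(a, b)\<in>{(a, b). a + b \<le> i}. ?c a b * fst z ^ a * snd z ^ b)
      = (\<Sum>p\<in>{(a, b). a + b \<le> i}. if p = (0, 0) then c else 0)" for z :: pt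
    by (rule sum.cong) (auto split: if_split_asm)
  also have "\<dots> = c"
    using finite_total_degree_indices by (simp add: sum.delta)
  finally show ?thesis
    unfolding Ptot_def by (intro CollectI exI[of _ ?c]) (simp add: fun_eq_iff)
qed

lemma const_in_Qdeg: "(\<lambda>z. c) \<in> Qdeg i j"
proof -
  let ?c = "\<lambda>a b. if a = 0 \<and> b = 0 then c else 0"
  have "(\<Sum>b\<le>j. ?c a b * fst z ^ a * snd z ^ b)
      = (\<Sum>b\<le>j. if b = 0 then (if a = 0 then c else 0) else 0)" for a and z :: pt
    by (rule sum.cong) auto
  then show ?thesis
    unfolding Qdeg_def by (intro CollectI exI[of _ ?c]) (simp add: fun_eq_iff)
qed

lemma const_in_Sigma_h: "(\<lambda>z. c) \<in> Sigma_h r K"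
  by (cases K) (auto simp: const_in_Ptot const_in_Qdeg)

lemma zero_in_W_h: "(\<lambda>z. 0) \<in> W_h k K"
  by (cases K) (use const_in_Ptot[of 0] const_in_Qdeg[of 0] in \<open>auto intro!: exI[of _ 0]\<close>)

lemma polyfun_d1_exists:
  "f \<in> polyfun \<Longrightarrow> \<exists>g\<in>polyfun. \<forall>t y. ((\<lambda>t. f (t, y)) has_real_derivative g (t, y)) (at t)"
proof (induction rule: polyfun.induct)
  case (monomial c a b)
  show ?case
    by (rule bexI[of _ "\<lambda>z. (c * real a) * fst z ^ (a - 1) * snd z ^ b"])
      (auto intro!: derivative_eq_intros polyfun.monomial)
next
  case (add f g)
  then show ?case
    by (auto intro!: bexI[of _ "\<lambda>z. _ z + _ z"] polyfun.add DERIV_add)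
qed

lemma polyfun_d2_exists:
  "f \<in> polyfun \<Longrightarrow> \<exists>g\<in>polyfun. \<forall>x t. ((\<lambda>t. f (x, t)) has_real_derivative g (x, t)) (at t)"
proof (induction rule: polyfun.induct)
  case (monomial c a b)
  show ?case
    by (rule bexI[of _ "\<lambda>z. (c * real b) * fst z ^ a * snd z ^ (b - 1)"])
      (auto intro!: derivative_eq_intros polyfun.monomial)
next
  case (add f g)
  then show ?case
    by (auto intro!: bexI[of _ "\<lambda>z. _ z + _ z"] polyfun.add DERIV_add)
qed

lemma
  assumes "f \<in> polyfun"
  shows has_real_derivative_d1: "((\<lambda>t. f (t, y)) has_real_derivative d1 f (t, y)) (at t)"
    and d1_polyfun: "d1 f \<in> polyfun"
proof -
  obtain g where g: "g \<in> polyfun" "\<And>t y. ((\<lambda>t. f (t, y)) has_real_derivative g (t, y)) (at t)"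
    using polyfun_d1_exists[OF assms] by blast
  then have "d1 f = g"
    by (auto simp: fun_eq_iff d1_def intro!: DERIV_imp_deriv)
  with g show "((\<lambda>t. f (t, y)) has_real_derivative d1 f (t, y)) (at t)" "d1 f \<in> polyfun"
    by auto
qed

lemma
  assumes "f \<in> polyfun"
  shows has_real_derivative_d2: "((\<lambda>t. f (x, t)) has_real_derivative d2 f (x, t)) (at t)"
    and d2_polyfun: "d2 f \<in> polyfun"
proof -
  obtain g where g: "g \<in> polyfun" "\<And>x t. ((\<lambda>t. f (x, t)) has_real_derivative g (x, t)) (at t)"
    using polyfun_d2_exists[OF assms] by blast
  then have "d2 f = g"
    by (auto simp: fun_eq_iff d2_def intro!: DERIV_imp_deriv)
  with g show "((\<lambda>t. f (x, t)) has_real_derivative d2 f (x, t)) (at t)" "d2 f \<in> polyfun"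
    by auto
qed

lemma d1_add: "f \<in> polyfun \<Longrightarrow> g \<in> polyfun \<Longrightarrow> d1 (\<lambda>z. f z + g z) = (\<lambda>z. d1 f z + d1 g z)"
  unfolding fun_eq_iff d1_def[of "\<lambda>z. f z + g z"]
  by (auto intro!: DERIV_imp_deriv DERIV_add has_real_derivative_d1)

lemma d2_add: "f \<in> polyfun \<Longrightarrow> g \<in> polyfun \<Longrightarrow> d2 (\<lambda>z. f z + g z) = (\<lambda>z. d2 f z + d2 g z)"
  unfolding fun_eq_iff d2_def[of "\<lambda>z. f z + g z"]
  by (auto intro!: DERIV_imp_deriv DERIV_add has_real_derivative_d2)

lemma d1_diff: "f \<in> polyfun \<Longrightarrow> g \<in> polyfun \<Longrightarrow> d1 (\<lambda>z. f z - g z) = (\<lambda>z. d1 f z - d1 g z)"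
  unfolding fun_eq_iff d1_def[of "\<lambda>z. f z - g z"]
  by (auto intro!: DERIV_imp_deriv DERIV_diff has_real_derivative_d1)

lemma d2_diff: "f \<in> polyfun \<Longrightarrow> g \<in> polyfun \<Longrightarrow> d2 (\<lambda>z. f z - g z) = (\<lambda>z. d2 f z - d2 g z)"
  unfolding fun_eq_iff d2_def[of "\<lambda>z. f z - g z"]
  by (auto intro!: DERIV_imp_deriv DERIV_diff has_real_derivative_d2)

lemma d2_uminus: "f \<in> polyfun \<Longrightarrow> d2 (\<lambda>z. - f z) = (\<lambda>z. - d2 f z)"
  unfolding fun_eq_iff d2_def[of "\<lambda>z. - f z"]
  by (auto intro!: DERIV_imp_deriv DERIV_minus has_real_derivative_d2)

lemma d1_monomial:
  "d1 (\<lambda>z. c * fst z ^ a * snd z ^ b) = (\<lambda>z. (c * real a) * fst z ^ (a - 1) * snd z ^ b)"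
  unfolding fun_eq_iff d1_def by (auto intro!: DERIV_imp_deriv derivative_eq_intros)

lemma d2_monomial:
  "d2 (\<lambda>z. c * fst z ^ a * snd z ^ b) = (\<lambda>z. (c * real b) * fst z ^ a * snd z ^ (b - 1))"
  unfolding fun_eq_iff d2_def by (auto intro!: DERIV_imp_deriv derivative_eq_intros)

lemma d2_d1_commute: "f \<in> polyfun \<Longrightarrow> d2 (d1 f) = d1 (d2 f)"
proof (induction rule: polyfun.induct)
  case (monomial c a b)
  show ?case
    unfolding d1_monomial d2_monomial by (simp only: d1_monomial d2_monomial mult_ac)
next
  case (add f g)
  then show ?case
    by (simp add: d1_add d2_add d1_polyfun d2_polyfun)
qed

definition polyvec :: "vfield \<Rightarrow> bool" where
  "polyvec u \<longleftrightarrow> (\<lambda>y. fst (u y)) \<in> polyfun \<and> (\<lambda>y. snd (u y)) \<in> polyfun"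

lemma curl_add: "polyvec u \<Longrightarrow> polyvec v \<Longrightarrow> curl (\<lambda>x. u x + v x) = (\<lambda>x. curl u x + curl v x)"
  unfolding polyvec_def curl_def by (simp add: d1_add d2_add fun_eq_iff algebra_simps)

lemma curl_diff: "polyvec u \<Longrightarrow> polyvec v \<Longrightarrow> curl (\<lambda>x. u x - v x) = (\<lambda>x. curl u x - curl v x)"
  unfolding polyvec_def curl_def by (simp add: d1_diff d2_diff fun_eq_iff algebra_simps)

lemma polyvec_grad: "s \<in> polyfun \<Longrightarrow> polyvec (grad s)"
  unfolding polyvec_def grad_def by (simp add: d1_polyfun d2_polyfun)

lemma curl_grad: "s \<in> polyfun \<Longrightarrow> curl (grad s) = (\<lambda>x. 0)"
  unfolding curl_def grad_def by (simp add: d2_d1_commute)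

lemma grad_const: "grad (\<lambda>x. c) = (\<lambda>x. 0)"
  using d1_monomial[of c 0 0] d2_monomial[of c 0 0]
  by (simp add: grad_def[abs_def] zero_prod_def)

lemma grad_eq_0_imp_const:
  assumes "s \<in> polyfun" "grad s = (\<lambda>x. 0)"
  shows "s = (\<lambda>x. s (0, 0))"
proof
  fix z :: pt
  obtain x y where z: "z = (x, y)"
    by (cases z)
  have "d1 s p = 0" "d2 s p = 0" for p
    using fun_cong[OF assms(2), of p] by (simp_all add: grad_def zero_prod_def)
  then have "s (x, y) = s (0, y)" "s (0, y) = s (0, 0)"
    using DERIV_isconst_all[of "\<lambda>t. s (t, y)" x 0] DERIV_isconst_all[of "\<lambda>t. s (0, t)" y 0]
      has_real_derivative_d1[OF assms(1)] has_real_derivative_d2[OF assms(1)]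
    by simp_all
  then show "s z = s (0, 0)"
    using z by simp
qed

lemma has_integral_power_01: "((\<lambda>t::real. t ^ n) has_integral 1 / real (Suc n)) {0..1}"
proof -
  have "((\<lambda>t::real. t ^ n) has_integral 1 ^ Suc n / real (Suc n) - 0 ^ Suc n / real (Suc n)) {0..1}"
  proof (rule fundamental_theorem_of_calculus)
    fix x :: real
    have "((\<lambda>t. t ^ Suc n / real (Suc n)) has_real_derivative
        real (Suc n) * x ^ (Suc n - Suc 0) / real (Suc n)) (at x within {0..1})"
      by (rule DERIV_cdivide[OF DERIV_pow])
    then show "((\<lambda>t. t ^ Suc n / real (Suc n)) has_vector_derivative x ^ n) (at x within {0..1})"
      by (simp add: has_real_derivative_iff_has_vector_derivative[symmetric] del: of_nat_Suc)
  qed simp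
  then show ?thesis
    by simp
qed

text \<open>\<open>J\<close> is the polynomial with \<open>poinc w x = J x \<cdot> x\<^sup>\<perp>\<close>; the second property is Euler's identity
  \<open>div (J x) = w\<close>, which is exactly \<open>curl (poinc w) = w\<close>.\<close>
lemma poincare_potential_exists:
  "w \<in> polyfun \<Longrightarrow> \<exists>J\<in>polyfun. (\<forall>x. ((\<lambda>t. t * w (t *\<^sub>R x)) has_integral J x) {0..1})
     \<and> (\<forall>x. d1 (\<lambda>y. J y * fst y) x + d2 (\<lambda>y. J y * snd y) x = w x)"
proof (induction rule: polyfun.induct)
  case (monomial c a b)
  define J where "J = (\<lambda>z::pt. (c / real (a + b + 2)) * fst z ^ a * snd z ^ b)"
  have "((\<lambda>t. (c * fst x ^ a * snd x ^ b) * t ^ (a + b + 1)) has_integral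
      (c * fst x ^ a * snd x ^ b) * (1 / real (Suc (a + b + 1)))) {0..1}" for x :: pt
    by (rule has_integral_mult_right[OF has_integral_power_01])
  then have "((\<lambda>t. t * (c * fst (t *\<^sub>R x) ^ a * snd (t *\<^sub>R x) ^ b)) has_integral J x) {0..1}"
    for x
    by (simp add: J_def power_mult_distrib power_add mult_ac)
  moreover have "d1 (\<lambda>y. J y * fst y) x + d2 (\<lambda>y. J y * snd y) x = c * fst x ^ a * snd x ^ b"
    for x
  proof -
    have "(\<lambda>y. J y * fst y) = (\<lambda>z. (c / real (a + b + 2)) * fst z ^ Suc a * snd z ^ b)"
      "(\<lambda>y. J y * snd y) = (\<lambda>z. (c / real (a + b + 2)) * fst z ^ a * snd z ^ Suc b)"
      by (simp_all add: J_def fun_eq_iff mult_ac)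
    then have "d1 (\<lambda>y. J y * fst y) x + d2 (\<lambda>y. J y * snd y) x
        = c / real (a + b + 2) * real (Suc a + Suc b) * fst x ^ a * snd x ^ b"
      by (simp only: d1_monomial d2_monomial) (simp add: algebra_simps add_divide_distrib[symmetric])
    then show ?thesis
      by simp
  qed
  moreover have "J \<in> polyfun"
    unfolding J_def by (rule polyfun.monomial)
  ultimately show ?case
    by blast
next
  case (add f g)
  then obtain Jf Jg where Jf: "Jf \<in> polyfun" "\<And>x. ((\<lambda>t. t * f (t *\<^sub>R x)) has_integral Jf x) {0..1}"
      "\<And>x. d1 (\<lambda>y. Jf y * fst y) x + d2 (\<lambda>y. Jf y * snd y) x = f x"
    and Jg: "Jg \<in> polyfun" "\<And>x. ((\<lambda>t. t * g (t *\<^sub>R x)) has_integral Jg x) {0..1}"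
      "\<And>x. d1 (\<lambda>y. Jg y * fst y) x + d2 (\<lambda>y. Jg y * snd y) x = g x"
    by blast
  have "((\<lambda>t. t * (f (t *\<^sub>R x) + g (t *\<^sub>R x))) has_integral Jf x + Jg x) {0..1}" for x
    using has_integral_add[OF Jf(2) Jg(2)] by (simp add: distrib_left)
  moreover have "d1 (\<lambda>y. (Jf y + Jg y) * fst y) x + d2 (\<lambda>y. (Jf y + Jg y) * snd y) x
      = f x + g x" for x
    using d1_add[of "\<lambda>y. Jf y * fst y" "\<lambda>y. Jg y * fst y"]
      d2_add[of "\<lambda>y. Jf y * snd y" "\<lambda>y. Jg y * snd y"] Jf Jg
    by (simp add: polyfun_mult polyfun_fst polyfun_snd algebra_simps)
  ultimately show ?case
    using polyfun.add[OF Jf(1) Jg(1)] by (intro bexI[of _ "\<lambda>z. Jf z + Jg z"]) auto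
qed

lemma
  assumes "w \<in> polyfun"
  shows polyvec_poinc: "polyvec (poinc w)"
    and curl_poinc: "curl (poinc w) = w"
proof -
  obtain J where J: "J \<in> polyfun" "\<And>x. ((\<lambda>t. t * w (t *\<^sub>R x)) has_integral J x) {0..1}"
    "\<And>x. d1 (\<lambda>y. J y * fst y) x + d2 (\<lambda>y. J y * snd y) x = w x"
    using poincare_potential_exists[OF assms] by blast
  then have "poinc w = (\<lambda>x. J x *\<^sub>R perp x)"
    by (simp add: fun_eq_iff poinc_def integral_unique)
  then have fst_poinc: "(\<lambda>y. fst (poinc w y)) = (\<lambda>y. - (J y * snd y))"
    and snd_poinc: "(\<lambda>y. snd (poinc w y)) = (\<lambda>y. J y * fst y)"
    by (simp_all add: perp_def fun_eq_iff)
  have "(\<lambda>y. J y * snd y) \<in> polyfun" "(\<lambda>y. J y * fst y) \<in> polyfun"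
    using J(1) polyfun_fst polyfun_snd by (auto intro: polyfun_mult)
  then show "polyvec (poinc w)" "curl (poinc w) = w"
    unfolding polyvec_def curl_def fst_poinc snd_poinc
    using J(3) by (simp_all add: d2_uminus fun_eq_iff polyfun_uminus)
qed

lemma poinc_zero: "poinc (\<lambda>x. 0) = (\<lambda>x. 0)"
  by (simp add: poinc_def[abs_def])

lemma curl_grad_add: "s \<in> polyfun \<Longrightarrow> polyvec q \<Longrightarrow> curl (\<lambda>x. grad s x + q x) = curl q"
  by (simp add: curl_add polyvec_grad curl_grad)

locale grad_curl_complex =
  fixes S W :: "sfield set" and Q :: "sfield \<Rightarrow> vfield"
  assumes S_subset_polyfun: "S \<subseteq> polyfun"
    and const_in_S: "(\<lambda>x. c) \<in> S"
    and zero_in_W: "(\<lambda>x. 0) \<in> W"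
    and polyvec_Q: "w \<in> W \<Longrightarrow> polyvec (Q w)"
    and curl_Q: "w \<in> W \<Longrightarrow> curl (Q w) = w"
    and Q_zero: "Q (\<lambda>x. 0) = (\<lambda>x. 0)"
begin

definition V :: "vfield set" where
  "V = {\<lambda>x. grad s x + Q w x | s w. s \<in> S \<and> w \<in> W}"

lemma curl_grad_add_Q: "s \<in> S \<Longrightarrow> w \<in> W \<Longrightarrow> curl (\<lambda>x. grad s x + Q w x) = w"
  using S_subset_polyfun by (auto simp: curl_grad_add polyvec_Q curl_Q)

lemma grad_in_V: "s \<in> S \<Longrightarrow> grad s \<in> V"
  unfolding V_def using zero_in_W Q_zero by force

lemma grad_image_inter_Q_image: "grad ` S \<inter> Q ` W = {\<lambda>x. 0}"
proof
  show "{\<lambda>x. 0} \<subseteq> grad ` S \<inter> Q ` W"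
    using const_in_S[of 0] grad_const[of 0] zero_in_W Q_zero by (metis IntI empty_subsetI image_eqI insert_subset)
  show "grad ` S \<inter> Q ` W \<subseteq> {\<lambda>x. 0}"
  proof
    fix v
    assume "v \<in> grad ` S \<inter> Q ` W"
    then obtain s w where "s \<in> S" "w \<in> W" "v = grad s" "v = Q w"
      by blast
    then have "w = (\<lambda>x. 0)"
      using S_subset_polyfun curl_Q curl_grad by (metis subsetD)
    then show "v \<in> {\<lambda>x. 0}"
      using \<open>v = Q w\<close> Q_zero by simp
  qed
qed

lemma curl_image_V: "curl ` V = W"
proof
  show "curl ` V \<subseteq> W"
    unfolding V_def using curl_grad_add_Q by auto
  show "W \<subseteq> curl ` V"
  proof
    fix w
    assume "w \<in> W"
    then have "(\<lambda>x. grad (\<lambda>z. 0) x + Q w x) \<in> V" "curl (\<lambda>x. grad (\<lambda>z. 0) x + Q w x) = w"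
      using const_in_S curl_grad_add_Q unfolding V_def by blast+
    then show "w \<in> curl ` V"
      by (metis image_eqI)
  qed
qed

lemma curl_kernel_V: "{v \<in> V. curl v = (\<lambda>x. 0)} = grad ` S"
proof
  show "grad ` S \<subseteq> {v \<in> V. curl v = (\<lambda>x. 0)}"
    using grad_in_V S_subset_polyfun curl_grad by auto
  show "{v \<in> V. curl v = (\<lambda>x. 0)} \<subseteq> grad ` S"
  proof
    fix v
    assume "v \<in> {v \<in> V. curl v = (\<lambda>x. 0)}"
    then obtain s w where "s \<in> S" "w \<in> W" "v = (\<lambda>x. grad s x + Q w x)" "curl v = (\<lambda>x. 0)"
      unfolding V_def by blast
    then have "v = grad s"
      using curl_grad_add_Q Q_zero by simp
    with \<open>s \<in> S\<close> show "v \<in> grad ` S"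
      by blast
  qed
qed

lemma grad_kernel_S: "{s \<in> S. grad s = (\<lambda>x. 0)} = range (\<lambda>c. \<lambda>x. c)"
  using grad_eq_0_imp_const S_subset_polyfun const_in_S grad_const by blast

end

lemma admissible_Phi_zero:
  assumes "admissible_Phi k K Phi"
  shows "Phi (\<lambda>x. 0) = (\<lambda>x. 0)"
proof -
  have "Phi (\<lambda>x. 0 * 0 + 0 * 0) = (\<lambda>x. 0 * Phi (\<lambda>x. 0) x + 0 * Phi (\<lambda>x. 0) x)"
    using conjunct1[OF assms[unfolded admissible_Phi_def], rule_format, OF zero_in_W_h zero_in_W_h]
    by blast
  then show ?thesis
    by simp
qed

lemma
  assumes "w \<in> polyfun" "Phi w \<in> polyfun"
  shows polyvec_poinc_mod: "polyvec (poinc_mod Phi w)"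
    and curl_poinc_mod: "curl (poinc_mod Phi w) = w"
proof -
  have eq: "poinc_mod Phi w = (\<lambda>x. poinc w x - grad (Phi w) x)"
    by (simp add: poinc_mod_def[abs_def])
  show "polyvec (poinc_mod Phi w)"
    using polyvec_poinc[OF assms(1)] polyvec_grad[OF assms(2)]
    unfolding eq polyvec_def by (auto intro: polyfun_diff)
  show "curl (poinc_mod Phi w) = w"
    unfolding eq curl_diff[OF polyvec_poinc[OF assms(1)] polyvec_grad[OF assms(2)]]
    by (simp add: curl_poinc[OF assms(1)] curl_grad[OF assms(2)])
qed

lemma poinc_mod_zero: "Phi (\<lambda>x. 0) = (\<lambda>x. 0) \<Longrightarrow> poinc_mod Phi (\<lambda>x. 0) = (\<lambda>x. 0)"
  by (simp add: poinc_mod_def[abs_def] poinc_zero grad_const)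

lemma Psum_right_inverse_of_curl:
  assumes "uses_mod k r \<longrightarrow> admissible_Phi k K Phi"
  obtains Q where "Psum r k K Phi = Q ` W_h k K" "grad_curl_complex (Sigma_h r K) (W_h k K) Q"
proof (cases "uses_mod k r")
  case True
  then have adm: "admissible_Phi k K Phi"
    using assms by blast
  have "grad_curl_complex (Sigma_h r K) (W_h k K) (poinc_mod Phi)"
  proof
    fix w
    assume "w \<in> W_h k K"
    moreover from this have "Phi w \<in> polyfun"
      using adm Poly_subset_polyfun unfolding admissible_Phi_def by blast
    ultimately show "polyvec (poinc_mod Phi w)" "curl (poinc_mod Phi w) = w"
      using W_h_subset_polyfun polyvec_poinc_mod curl_poinc_mod by blast+
  qed (simp_all add: Sigma_h_subset_polyfun const_in_Sigma_h zero_in_W_h poinc_mod_zero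
      admissible_Phi_zero[OF adm])
  with True show ?thesis
    using that by (simp add: Psum_def)
next
  case False
  have "grad_curl_complex (Sigma_h r K) (W_h k K) poinc"
    using W_h_subset_polyfun
    by unfold_locales
      (auto simp: Sigma_h_subset_polyfun const_in_Sigma_h zero_in_W_h poinc_zero
        intro: polyvec_poinc curl_poinc)
  with False show ?thesis
    using that by (simp add: Psum_def)
qed

theorem mainTheorem3:
  fixes k r :: nat and K :: elem and Phi :: "sfield \<Rightarrow> sfield"
  assumes "k \<ge> 2"
    and "r \<in> {k - 1, k, k + 1}"
    and "valid_elem K"
    and "uses_mod k r \<longrightarrow> admissible_Phi k K Phi"
  shows "grad ` Sigma_h r K \<inter> Psum r k K Phi = {(\<lambda>x. 0)}
    \<and> inj (\<lambda>c::real. (\<lambda>x::pt. c))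
    \<and> (\<forall>c::real. (\<lambda>x::pt. c) \<in> Sigma_h r K)
    \<and> grad ` Sigma_h r K \<subseteq> V_h r k K Phi
    \<and> curl ` V_h r k K Phi \<subseteq> W_h k K
    \<and> (\<forall>s\<in>Sigma_h r K. curl (grad s) = (\<lambda>x. 0))
    \<and> {s \<in> Sigma_h r K. grad s = (\<lambda>x. 0)} = range (\<lambda>c::real. (\<lambda>x::pt. c))
    \<and> {v \<in> V_h r k K Phi. curl v = (\<lambda>x. 0)} = grad ` Sigma_h r K
    \<and> curl ` V_h r k K Phi = W_h k K"
proof -
  obtain Q where Psum: "Psum r k K Phi = Q ` W_h k K"
    and complex: "grad_curl_complex (Sigma_h r K) (W_h k K) Q"
    using Psum_right_inverse_of_curl[OF assms(4)] by blast
  interpret grad_curl_complex "Sigma_h r K" "W_h k K" Q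
    by (rule complex)
  have "V_h r k K Phi = V"
    unfolding V_h_def V_def Psum by blast
  moreover have "inj (\<lambda>c::real. (\<lambda>x::pt. c))"
    by (simp add: inj_def fun_eq_iff)
  moreover have "\<forall>s\<in>Sigma_h r K. curl (grad s) = (\<lambda>x. 0)"
    using curl_grad S_subset_polyfun by blast
  ultimately show ?thesis
    unfolding Psum
    using grad_image_inter_Q_image const_in_S grad_in_V curl_image_V grad_kernel_S curl_kernel_V
    by blast
qed

end
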